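(* Let $N\in\mathbb{N}$. (i) For any $k\in\mathbb{Z}_+$ and $s\in\mathbb{R}$, $$\gamma_N^{s,k}=k!\sum_{l=0}^{\lfloor k/2\rfloor}(k-2l)!\,l!\,\Bigl(\frac{N-3}{2}+l\Bigr)_l\Bigl(\sum_{n=\lceil k/2\rceil}^{k-l}2^{2n-k+l}\binom{s/2}{n}\binom{n}{k-n}\binom{k-n}{l}\Bigr)^2.$$ (ii) For any $k\in\mathbb{N}$, $$\ell_N^k=k!\sum_{l=0}^{\lfloor k/2\rfloor}(k-2l)!\,l!\,\Bigl(\frac{N-3}{2}+l\Bigr)_l\Bigl(\sum_{n=\lceil k/2\rceil}^{k-l}2^{2n-k+l}\frac{(-1)^n}{2n}\binom{n}{k-n}\binom{k-n}{l}\Bigr)^2.$$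
   Context: $|x|_N$ is the Euclidean norm on $\mathbb{R}^N$, $\log$ the natural logarithm, $I_N=\{1,\ldots,N\}$, $D_i=\partial_{x_{i_1}}\cdots\partial_{x_{i_k}}$ for $i=(i_1,\ldots,i_k)\in I_N^k$, and $|\nabla_N^k u(x)|_{N^k}=\bigl(\sum_{i\in I_N^k}(D_iu(x))^2\bigr)^{1/2}$ (for $k=0$ this is $|u(x)|$). It is known that for $k\in\mathbb{Z}_+$, $s\in\mathbb{R}$ the function $x\mapsto(|x|_N^{k-s}|\nabla_N^k[|x|_N^s]|_{N^k})^2$ is constant on $\mathbb{R}^N\setminus\{0\}$; its value is denoted $\gamma_N^{s,k}$. Likewise for $k\in\mathbb{N}$ the function $x\mapsto(|x|_N^{k}|\nabla_N^k[\log|x|_N]|_{N^k})^2$ is constant on $\mathbb{R}^N\setminus\{0\}$, with value $\ell_N^k$. Notation: $(\nu)_k=\prod_{j=0}^{k-1}(\nu-j)$ for $k\in\mathbb{N}$, $(\nu)_0=1$; $\binom{\nu}{k}=(\nu)_k/k!$ for $\nu\in\mathbb{R}$, $k\in\mathbb{Z}_+$; $\lfloor\cdot\rfloor,\lceil\cdot\rceil$ are floor and ceiling. *)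

theory Defs
  imports "HOL-Analysis.Analysis"
begin

text \<open>Partial derivative of a real function on the Euclidean space real^'n
  (dimension N = CARD('n)) in the direction of the j-th coordinate axis.\<close>
definition partial_coord :: "'n::finite \<Rightarrow> (real^'n \<Rightarrow> real) \<Rightarrow> real^'n \<Rightarrow> real" where
  "partial_coord j f x = deriv (\<lambda>t. f (x + t *\<^sub>R axis j 1)) 0"

fun Dmulti :: "'n::finite list \<Rightarrow> (real^'n \<Rightarrow> real) \<Rightarrow> real^'n \<Rightarrow> real" where
  "Dmulti [] f = f"
| "Dmulti (j # js) f = partial_coord j (Dmulti js f)"

definition grad_norm :: "nat \<Rightarrow> (real^'n::finite \<Rightarrow> real) \<Rightarrow> real^'n \<Rightarrow> real" where
  "grad_norm k f x = sqrt (\<Sum>is\<in>{is :: 'n list. length is = k}. (Dmulti is f x)\<^sup>2)"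

definition falling :: "real \<Rightarrow> nat \<Rightarrow> real" where
  "falling \<nu> k = (\<Prod>j<k. \<nu> - real j)"

end

theory Submission
  imports Defs "HOL-Computational_Algebra.Formal_Power_Series"
begin

text \<open>Both functions are radial, \<open>f x = c 0 ((norm x)\<^sup>2)\<close>, with coefficient functions satisfying
  \<open>c n' = c (n + 1) / 2\<close>. Then \<open>D\<^sub>I f x = (\<Sum>n. c n ((norm x)\<^sup>2) * P I n x)\<close> for polynomials \<open>P I n\<close>
  given by a simple recursion in the multi-index \<open>I\<close>, so \<open>(grad_norm k f x)\<^sup>2\<close> is a quadratic form in the
  numbers \<open>c n ((norm x)\<^sup>2)\<close> whose coefficients are the Gram sums \<open>\<Sum>I. P I n x * P I m x\<close>. Euler's
  identity for the homogeneous \<open>P I n\<close> yields a recursion for these Gram sums in which \<open>x\<close> enters only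
  through \<open>(norm x)\<^sup>2\<close>, so they may be computed at \<open>x = norm x *\<^sub>R axis a 1\<close>. There \<open>P I n x\<close> factors
  into Gaussian moments of the multiplicities in \<open>I\<close> of the indices \<open>b \<noteq> a\<close> times an explicit term in
  the multiplicity of \<open>a\<close>. Summing the squared moments over all multi-indices is a convolution that
  Vandermonde's identity evaluates, and it produces the factor \<open>falling ((N - 3) / 2 + l) l\<close>.\<close>

section \<open>Sums over tuples\<close>

definition tuples :: "'a set \<Rightarrow> nat \<Rightarrow> 'a list set" where
  "tuples S k = {xs. set xs \<subseteq> S \<and> length xs = k}"

lemma finite_tuples [simp]: "finite S \<Longrightarrow> finite (tuples S k)"
  unfolding tuples_def by (rule finite_lists_length_eq)

lemma tuples_0 [simp]: "tuples S 0 = {[]}"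
  by (auto simp: tuples_def)

lemma sum_tuples_Suc:
  assumes "finite S"
  shows "(\<Sum>I\<in>tuples S (Suc m). F I) = (\<Sum>j\<in>S. \<Sum>K\<in>tuples S m. F (j # K))"
proof -
  have "tuples S (Suc m) = (\<lambda>(j, K). j # K) ` (S \<times> tuples S m)"
    by (auto simp: tuples_def image_iff length_Suc_conv)
  moreover have "inj_on (\<lambda>(j, K). j # K) (S \<times> tuples S m)"
    by (auto simp: inj_on_def)
  ultimately show ?thesis
    by (simp add: sum.reindex sum.cartesian_product case_prod_beta')
qed

lemma sum_count_mset_UNIV: "(\<Sum>i\<in>UNIV. count (mset K) i) = length (K :: 'a::finite list)"
  by (simp add: count_mset sum_count_set)

lemma sum_tuples_count_remove1:
  fixes H :: "'a::finite list \<Rightarrow> real"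
  assumes H: "\<And>X Y. mset X = mset Y \<Longrightarrow> H X = H Y"
  shows "(\<Sum>J\<in>tuples UNIV (Suc m). real (count (mset J) i) * H (remove1 i J))
         = real (Suc m) * (\<Sum>K\<in>tuples UNIV m. H K)"
  using H
proof (induction m arbitrary: H)
  case 0
  have "(\<Sum>J\<in>tuples UNIV (Suc 0). real (count (mset J) i) * H (remove1 i J))
      = (\<Sum>j\<in>UNIV. if j = i then H [] else 0)"
    unfolding sum_tuples_Suc[OF finite_class.finite_UNIV] by (intro sum.cong) auto
  then show ?case by simp
next
  case (Suc m)
  have step: "real (count (mset (j # J)) i) * H (remove1 i (j # J))
      = (if j = i then H J else 0) + real (count (mset J) i) * H (j # remove1 i J)" for j J
  proof (cases "j = i")
    case True
    have "i \<in> set J \<Longrightarrow> H (i # remove1 i J) = H J"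
      by (rule Suc.prems) simp
    with True show ?thesis
      by (cases "i \<in> set J") (auto simp: algebra_simps)
  qed simp
  have IH: "(\<Sum>J\<in>tuples UNIV (Suc m). real (count (mset J) i) * H (j # remove1 i J))
      = real (Suc m) * (\<Sum>K\<in>tuples UNIV m. H (j # K))" for j
    by (rule Suc.IH) (rule Suc.prems, simp)
  have "(\<Sum>J\<in>tuples UNIV (Suc (Suc m)). real (count (mset J) i) * H (remove1 i J))
      = (\<Sum>J\<in>tuples UNIV (Suc m). H J)
        + (\<Sum>j\<in>UNIV. \<Sum>J\<in>tuples UNIV (Suc m). real (count (mset J) i) * H (j # remove1 i J))"
    unfolding sum_tuples_Suc[OF finite_class.finite_UNIV, where m="Suc m"] step sum.distrib
    by (subst (1) sum.swap) simp
  also have "\<dots> = (\<Sum>J\<in>tuples UNIV (Suc m). H J) + real (Suc m) * (\<Sum>j\<in>UNIV. \<Sum>K\<in>tuples UNIV m. H (j # K))"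
    unfolding IH by (simp add: sum_distrib_left)
  also have "\<dots> = real (Suc (Suc m)) * (\<Sum>K\<in>tuples UNIV (Suc m). H K)"
    unfolding sum_tuples_Suc[OF finite_class.finite_UNIV, where m=m] by (simp add: algebra_simps)
  finally show ?case .
qed

lemma sum_choose_Suc_mult:
  fixes F :: "nat \<Rightarrow> real"
  shows "(\<Sum>m\<le>Suc k. real (Suc k choose m) * F m)
       = (\<Sum>m\<le>k. real (k choose m) * F m) + (\<Sum>m\<le>k. real (k choose m) * F (Suc m))"
proof -
  have "real (Suc k choose m) = real (k choose m) + (if m = 0 then 0 else real (k choose (m - 1)))" for m
    by (cases m) auto
  then have "(\<Sum>m\<le>Suc k. real (Suc k choose m) * F m)
      = (\<Sum>m\<le>Suc k. real (k choose m) * F m) + (\<Sum>m\<le>Suc k. (if m = 0 then 0 else real (k choose (m - 1))) * F m)"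
    by (simp add: sum.distrib[symmetric] distrib_right)
  also have "(\<Sum>m\<le>Suc k. real (k choose m) * F m) = (\<Sum>m\<le>k. real (k choose m) * F m)"
    by (simp add: sum.atMost_Suc)
  also have "(\<Sum>m\<le>Suc k. (if m = 0 then 0 else real (k choose (m - 1))) * F m)
      = (\<Sum>m\<le>k. real (k choose m) * F (Suc m))"
    by (subst sum.atMost_Suc_shift) simp
  finally show ?thesis .
qed

lemma sum_tuples_insert_by_count:
  fixes h :: "nat \<Rightarrow> 'a list \<Rightarrow> real"
  assumes fin: "finite B" and b: "b \<notin> B"
  shows "(\<Sum>I\<in>tuples (insert b B) k. h (count (mset I) b) (filter (\<lambda>x. x \<noteq> b) I))
       = (\<Sum>m\<le>k. real (k choose m) * (\<Sum>J\<in>tuples B m. h (k - m) J))"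
proof (induction k arbitrary: h)
  case (Suc k)
  let ?T = "tuples (insert b B) k" and ?f = "filter (\<lambda>x. x \<noteq> b)"
  have "(\<Sum>I\<in>tuples (insert b B) (Suc k). h (count (mset I) b) (?f I))
      = (\<Sum>K\<in>?T. h (count (mset (b # K)) b) (?f (b # K)))
        + (\<Sum>j\<in>B. \<Sum>K\<in>?T. h (count (mset (j # K)) b) (?f (j # K)))"
    using fin b by (simp add: sum_tuples_Suc)
  also have "(\<Sum>j\<in>B. \<Sum>K\<in>?T. h (count (mset (j # K)) b) (?f (j # K)))
      = (\<Sum>K\<in>?T. (\<lambda>c J. \<Sum>j\<in>B. h c (j # J)) (count (mset K) b) (?f K))"
    using b by (subst sum.swap) (intro sum.cong refl, auto)
  also have "(\<Sum>K\<in>?T. h (count (mset (b # K)) b) (?f (b # K))) + \<dots>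
      = (\<Sum>m\<le>k. real (k choose m) * (\<Sum>J\<in>tuples B m. h (Suc k - m) J))
        + (\<Sum>m\<le>k. real (k choose m) * (\<Sum>J\<in>tuples B (Suc m). h (Suc k - Suc m) J))"
  proof -
    have "(\<Sum>K\<in>?T. h (count (mset (b # K)) b) (?f (b # K)))
        = (\<Sum>m\<le>k. real (k choose m) * (\<Sum>J\<in>tuples B m. h (Suc (k - m)) J))"
      using Suc.IH[of "\<lambda>c J. h (Suc c) J"] by simp
    also have "\<dots> = (\<Sum>m\<le>k. real (k choose m) * (\<Sum>J\<in>tuples B m. h (Suc k - m) J))"
      by (intro sum.cong refl) (simp add: Suc_diff_le)
    moreover have "(\<Sum>K\<in>?T. (\<lambda>c J. \<Sum>j\<in>B. h c (j # J)) (count (mset K) b) (?f K))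
        = (\<Sum>m\<le>k. real (k choose m) * (\<Sum>J\<in>tuples B (Suc m). h (Suc k - Suc m) J))"
      using Suc.IH[of "\<lambda>c J. \<Sum>j\<in>B. h c (j # J)"]
      by (simp add: sum_tuples_Suc[OF fin] sum.swap[of _ "tuples B _" B])
    ultimately show ?thesis
      by simp
  qed
  also have "\<dots> = (\<Sum>m\<le>Suc k. real (Suc k choose m) * (\<Sum>J\<in>tuples B m. h (Suc k - m) J))"
    by (rule sum_choose_Suc_mult[symmetric])
  finally show ?case .
qed simp

lemma sum_atMost_eq_sum_even:
  fixes h :: "nat \<Rightarrow> 'b::comm_monoid_add"
  assumes "\<And>m. odd m \<Longrightarrow> h m = 0"
  shows "(\<Sum>m\<le>k. h m) = (\<Sum>l = 0..k div 2. h (2 * l))"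
proof -
  have "(\<Sum>l = 0..k div 2. h (2 * l)) = (\<Sum>m\<in>(\<lambda>l. 2 * l) ` {0..k div 2}. h m)"
    by (simp add: sum.reindex inj_on_def)
  also have "\<dots> = (\<Sum>m\<le>k. h m)"
  proof (rule sum.mono_neutral_left)
    show "\<forall>i\<in>{..k} - (\<lambda>l. 2 * l) ` {0..k div 2}. h i = 0"
    proof
      fix i
      assume i: "i \<in> {..k} - (\<lambda>l. 2 * l) ` {0..k div 2}"
      have "odd i"
      proof
        assume "even i"
        then obtain l where "i = 2 * l" ..
        with i show False by auto
      qed
      with assms show "h i = 0" .
    qed
  qed auto
  finally show ?thesis ..
qed

lemma sum_power2_linear_combination:
  fixes a :: "nat \<Rightarrow> real" and P :: "'b \<Rightarrow> nat \<Rightarrow> real"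
  shows "(\<Sum>I\<in>A. (\<Sum>n\<le>K. a n * P I n)\<^sup>2) = (\<Sum>n\<le>K. \<Sum>n'\<le>K. a n * a n' * (\<Sum>I\<in>A. P I n * P I n'))"
proof -
  have "(\<Sum>I\<in>A. (\<Sum>n\<le>K. a n * P I n)\<^sup>2) = (\<Sum>I\<in>A. \<Sum>n\<le>K. \<Sum>n'\<le>K. a n * a n' * (P I n * P I n'))"
    by (simp add: power2_eq_square sum_product algebra_simps)
  also have "\<dots> = (\<Sum>n\<le>K. \<Sum>n'\<le>K. \<Sum>I\<in>A. a n * a n' * (P I n * P I n'))"
    by (subst sum.swap) (simp add: sum.swap[of _ A])
  finally show ?thesis
    by (simp add: sum_distrib_left)
qed

lemma choose_mult_fact_mult_fact: "k \<le> n \<Longrightarrow> real (n choose k) * fact k * fact (n - k) = fact n"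
  by (simp add: binomial_fact)

lemma falling_eq_pochhammer: "falling (a + real L - 1) L = pochhammer a L"
proof (induction L)
  case (Suc L)
  have "falling (a + real (Suc L) - 1) (Suc L) = (a + real L) * falling (a + real L - 1) L"
    unfolding falling_def by (subst prod.lessThan_Suc_shift) (simp add: algebra_simps)
  with Suc show ?case
    by (simp add: pochhammer_Suc algebra_simps)
qed (simp add: falling_def)

section \<open>The coefficient polynomials of radial derivatives\<close>

text \<open>If \<open>c n' = c (n + 1) / 2\<close>, then \<open>D\<^sub>I (\<lambda>x. c 0 ((norm x)\<^sup>2)) x = (\<Sum>n. c n ((norm x)\<^sup>2) * radial_coeff x I n)\<close>:
  \<open>\<partial>\<^sub>i\<close> either hits \<open>c n\<close>, producing \<open>x\<^sub>i * c (n + 1)\<close>, or the coefficient, whose derivative is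
  \<open>count (mset I) i * radial_coeff x (remove1 i I) (n - 1)\<close> (\<open>radial_coeff_has_real_derivative\<close>).\<close>
function radial_coeff :: "('a \<Rightarrow> real) \<Rightarrow> 'a list \<Rightarrow> nat \<Rightarrow> real" where
  "radial_coeff v [] n = (if n = 0 then 1 else 0)"
| "radial_coeff v (i # J) 0 = 0"
| "radial_coeff v (i # J) (Suc n) =
     v i * radial_coeff v J n + real (count (mset J) i) * radial_coeff v (remove1 i J) n"
  by pat_completeness auto
termination
  by (relation "Wellfounded.measure (\<lambda>(v, I, n). length I)") (auto simp: length_remove1)

lemma radial_coeff_Cons_swap: "radial_coeff v (i # j # K) n = radial_coeff v (j # i # K) n"
proof (cases "i = j")
  case False
  then show ?thesis
  proof (cases n)
    case (Suc m)
    with False show ?thesis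
      by (cases m) (simp_all add: mset_remove1 remove1_commute algebra_simps)
  qed simp
qed simp

lemma radial_coeff_mset_cong:
  "mset I = mset I' \<Longrightarrow> radial_coeff v I n = radial_coeff v I' n"
proof (induction "length I" arbitrary: I I' n rule: less_induct)
  case less
  have same_head: "radial_coeff v (a # X) m = radial_coeff v (a # Y) m"
    if "mset X = mset Y" "length X < length I" for a X Y m
  proof (cases m)
    case (Suc m')
    have "radial_coeff v X m' = radial_coeff v Y m'"
      using less.hyps that by blast
    moreover have "radial_coeff v (remove1 a X) m' = radial_coeff v (remove1 a Y) m'"
      using that by (intro less.hyps) (auto simp: length_remove1 mset_remove1)
    ultimately show ?thesis using Suc that by simp
  qed simp
  show ?case
  proof (cases I)
    case Nil
    then show ?thesis using less.prems by simp
  next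
    case (Cons i J)
    then obtain i' J' where I': "I' = i' # J'"
      using less.prems by (cases I') auto
    show ?thesis
    proof (cases "i = i'")
      case True
      then show ?thesis using same_head[of J J'] less.prems Cons I' by simp
    next
      case False
      have "i' \<in> set J"
        using mset_eq_setD[OF less.prems] Cons I' False by auto
      define K where "K = remove1 i' J"
      have J: "mset J = mset (i' # K)" and J': "mset J' = mset (i # K)"
        using \<open>i' \<in> set J\<close> less.prems Cons I' False
        by (auto simp: K_def add_mset_commute dest: add_eq_conv_ex[THEN iffD1])
      have "radial_coeff v I n = radial_coeff v (i # i' # K) n"
        using same_head[OF J] Cons by simp
      also have "\<dots> = radial_coeff v (i' # i # K) n"
        by (rule radial_coeff_Cons_swap)
      also have "\<dots> = radial_coeff v I' n"
        using same_head[OF J'[symmetric]] I' Cons J by (simp flip: size_mset)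
      finally show ?thesis .
    qed
  qed
qed

lemma radial_coeff_eq_0_if_short: "length I < n \<Longrightarrow> radial_coeff v I n = 0"
proof (induction I arbitrary: n rule: length_induct)
  case (1 I)
  then show ?case
    by (cases I; cases n) (auto simp: length_remove1)
qed

lemma count_mult_radial_coeff_remove1_Cons:
  "real (count (mset (j # J)) i) * radial_coeff v (remove1 i (j # J)) m
   = (if i = j then radial_coeff v J m else 0)
     + real (count (mset J) i) * radial_coeff v (j # remove1 i J) m"
proof (cases "i = j")
  case True
  have "i \<in> set J \<Longrightarrow> radial_coeff v (i # remove1 i J) m = radial_coeff v J m"
    by (rule radial_coeff_mset_cong) simp
  with True show ?thesis
    by (cases "i \<in> set J") (auto simp: algebra_simps)
qed simp

lemma count_mult_count_remove1_commute:
  "count (mset J) i * count (mset (remove1 i J)) j = count (mset J) j * count (mset (remove1 j J)) i"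
  by (cases "i = j") (auto simp: mset_remove1)

lemma radial_coeff_euler_0:
  fixes v :: "'a::finite \<Rightarrow> real"
  shows "(\<Sum>i\<in>UNIV. v i * (real (count (mset J) i) * radial_coeff v (remove1 i J) 0))
       = (2 - real (length J)) * radial_coeff v J (Suc 0)"
proof (cases J rule: remdups_adj.cases)
  case (2 j)
  then have "(\<Sum>i\<in>UNIV. v i * (real (count (mset J) i) * radial_coeff v (remove1 i J) 0))
      = (\<Sum>i\<in>UNIV. if i = j then v j else 0)"
    by (intro sum.cong) auto
  with 2 show ?thesis
    by simp
next
  case (3 j j' K)
  have "remove1 i (j # j' # K) \<noteq> []" for i
    by simp
  then have "radial_coeff v (remove1 i (j # j' # K)) 0 = 0" for i
    by (metis neq_Nil_conv radial_coeff.simps(2))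
  moreover have "(2 - real (length J)) * radial_coeff v J (Suc 0) = 0"
    using 3 by (cases K) (auto simp: neq_Nil_conv)
  ultimately show ?thesis
    using 3 by simp
qed simp

text \<open>Euler's identity: \<open>radial_coeff v J n\<close> is homogeneous of degree \<open>2 n - length J\<close> in \<open>v\<close>,
  and \<open>count (mset J) i * radial_coeff v (remove1 i J) m\<close> is its derivative in \<open>v i\<close>.\<close>
lemma radial_coeff_euler:
  fixes v :: "'a::finite \<Rightarrow> real"
  shows "(\<Sum>i\<in>UNIV. v i * (real (count (mset J) i) * radial_coeff v (remove1 i J) m))
       = (2 * real m + 2 - real (length J)) * radial_coeff v J (Suc m)"
proof (induction "length J" arbitrary: J m rule: less_induct)
  case less
  show ?case
  proof (cases J)
    case Nil
    then show ?thesis by simp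
  next
    case (Cons j J')
    define S where "S K m' = (\<Sum>i\<in>UNIV. v i * (real (count (mset K) i) * radial_coeff v (remove1 i K) m'))"
      for K m'
    define c where "c = real (count (mset J') j)"
    have lhs: "S J m = v j * radial_coeff v J' m
      + (\<Sum>i\<in>UNIV. v i * (real (count (mset J') i) * radial_coeff v (j # remove1 i J') m))"
      unfolding S_def Cons count_mult_radial_coeff_remove1_Cons distrib_left sum.distrib
      by (simp add: if_distrib[of "\<lambda>x. v _ * x"] cong: if_cong)
    have rhs: "radial_coeff v J (Suc m) = v j * radial_coeff v J' m + c * radial_coeff v (remove1 j J') m"
      using Cons by (simp add: c_def)
    have c_length: "c * (real (length (remove1 j J')) * x) = c * ((real (length J') - 1) * x)" for x
    proof (cases "j \<in> set J'")
      case True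
      then have "length J' \<ge> 1"
        by (cases J') auto
      with True show ?thesis
        by (simp add: c_def length_remove1 of_nat_diff)
    qed (simp add: c_def)
    show ?thesis
    proof (cases m)
      case 0
      then show ?thesis
        using radial_coeff_euler_0[of v J] by simp
    next
      case (Suc m')
      have "(\<Sum>i\<in>UNIV. v i * (real (count (mset J') i) * radial_coeff v (j # remove1 i J') m))
          = v j * S J' m' + c * S (remove1 j J') m'"
        unfolding S_def c_def Suc sum_distrib_left sum.distrib[symmetric]
        by (intro sum.cong refl)
           (simp add: remove1_commute algebra_simps flip: of_nat_mult count_mult_count_remove1_commute)
      also have "\<dots> = v j * ((2 * real m - real (length J')) * radial_coeff v J' m)
          + c * ((2 * real m - real (length (remove1 j J'))) * radial_coeff v (remove1 j J') m)"
      proof -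
        have IH1: "S J' m' = (2 * real m' + 2 - real (length J')) * radial_coeff v J' m"
          unfolding S_def Suc by (rule less.hyps) (simp add: Cons)
        have IH2: "S (remove1 j J') m'
            = (2 * real m' + 2 - real (length (remove1 j J'))) * radial_coeff v (remove1 j J') m"
          unfolding S_def Suc by (rule less.hyps) (auto simp: Cons length_remove1)
        show ?thesis
          unfolding IH1 IH2 by (simp add: Suc algebra_simps)
      qed
      finally have "S J m = v j * radial_coeff v J' m
          + v j * ((2 * real m - real (length J')) * radial_coeff v J' m)
          + c * ((2 * real m - real (length (remove1 j J'))) * radial_coeff v (remove1 j J') m)"
        unfolding lhs by simp
      then show ?thesis
        unfolding S_def[symmetric] rhs using Cons c_length by (simp add: algebra_simps)
    qed
  qed
qed

lemma sum_mult_radial_coeff_Cons: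
  fixes v :: "'a::finite \<Rightarrow> real"
  shows "(\<Sum>i\<in>UNIV. v i * radial_coeff v (i # J) (Suc m))
       = (\<Sum>i\<in>UNIV. (v i)\<^sup>2) * radial_coeff v J m
         + (2 * real m + 2 - real (length J)) * radial_coeff v J (Suc m)"
proof -
  have "(\<Sum>i\<in>UNIV. v i * radial_coeff v (i # J) (Suc m))
      = (\<Sum>i\<in>UNIV. (v i)\<^sup>2 * radial_coeff v J m
          + v i * (real (count (mset J) i) * radial_coeff v (remove1 i J) m))"
    by (simp add: power2_eq_square algebra_simps)
  then show ?thesis
    by (simp only: sum.distrib radial_coeff_euler sum_distrib_right)
qed

lemma sum_radial_coeff_Cons_Cons:
  fixes v :: "'a::finite \<Rightarrow> real"
  shows "(\<Sum>i\<in>UNIV. radial_coeff v (i # i # K) (Suc m))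
       = (case m of 0 \<Rightarrow> 0 | Suc m' \<Rightarrow> (\<Sum>i\<in>UNIV. (v i)\<^sup>2) * radial_coeff v K m')
         + (2 * real m + real CARD('a)) * radial_coeff v K m"
proof -
  have "(\<Sum>i\<in>UNIV. radial_coeff v (i # i # K) (Suc m))
      = (\<Sum>i\<in>UNIV. v i * radial_coeff v (i # K) m + (1 + real (count (mset K) i)) * radial_coeff v K m)"
    by simp
  also have "\<dots> = (\<Sum>i\<in>UNIV. v i * radial_coeff v (i # K) m)
      + (real CARD('a) + real (length K)) * radial_coeff v K m"
    by (simp add: sum.distrib sum_distrib_right[symmetric] sum_count_mset_UNIV
             flip: of_nat_sum[of "count (mset K)"])
  finally have trace: "(\<Sum>i\<in>UNIV. radial_coeff v (i # i # K) (Suc m)) = \<dots>" .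
  show ?thesis
  proof (cases m)
    case 0
    have "real (length K) * radial_coeff v K 0 = 0"
      by (cases K) auto
    with 0 show ?thesis
      unfolding trace by (simp add: algebra_simps)
  next
    case (Suc m')
    then show ?thesis
      unfolding trace by (simp only: sum_mult_radial_coeff_Cons) (simp add: algebra_simps)
  qed
qed

definition radial_gram :: "('a::finite \<Rightarrow> real) \<Rightarrow> nat \<Rightarrow> nat \<Rightarrow> nat \<Rightarrow> real" where
  "radial_gram v k n n' = (\<Sum>I\<in>tuples UNIV k. radial_coeff v I n * radial_coeff v I n')"

lemma sum_count_radial_coeff_remove1_products:
  fixes v :: "'a::finite \<Rightarrow> real"
  shows "(\<Sum>i\<in>UNIV. \<Sum>J\<in>tuples UNIV (Suc k).
            real (count (mset J) i) * (radial_coeff v (remove1 i J) n * radial_coeff v (i # J) (Suc m)))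
       = real (Suc k) * ((case m of 0 \<Rightarrow> 0 | Suc m' \<Rightarrow> (\<Sum>i\<in>UNIV. (v i)\<^sup>2) * radial_gram v k n m')
                          + (2 * real m + real CARD('a)) * radial_gram v k n m)"
proof -
  have "(\<Sum>J\<in>tuples UNIV (Suc k).
          real (count (mset J) i) * (radial_coeff v (remove1 i J) n * radial_coeff v (i # J) (Suc m)))
      = (\<Sum>J\<in>tuples UNIV (Suc k). real (count (mset J) i)
          * (radial_coeff v (remove1 i J) n * radial_coeff v (i # i # remove1 i J) (Suc m)))" for i
  proof (intro sum.cong refl)
    fix J :: "'a list"
    have "i \<in> set J \<Longrightarrow> radial_coeff v (i # J) (Suc m) = radial_coeff v (i # i # remove1 i J) (Suc m)"
      by (rule radial_coeff_mset_cong) simp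
    then show "real (count (mset J) i) * (radial_coeff v (remove1 i J) n * radial_coeff v (i # J) (Suc m))
        = real (count (mset J) i) * (radial_coeff v (remove1 i J) n * radial_coeff v (i # i # remove1 i J) (Suc m))"
      by (cases "i \<in> set J") auto
  qed
  also have "\<dots> i = real (Suc k) * (\<Sum>K\<in>tuples UNIV k. radial_coeff v K n * radial_coeff v (i # i # K) (Suc m))"
    for i
    by (rule sum_tuples_count_remove1) (metis radial_coeff_mset_cong mset.simps(2))
  finally have "(\<Sum>i\<in>UNIV. \<Sum>J\<in>tuples UNIV (Suc k).
          real (count (mset J) i) * (radial_coeff v (remove1 i J) n * radial_coeff v (i # J) (Suc m)))
      = real (Suc k) * (\<Sum>K\<in>tuples UNIV k. radial_coeff v K n * (\<Sum>i\<in>UNIV. radial_coeff v (i # i # K) (Suc m)))"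
    by (simp add: sum_distrib_left sum.swap[of _ UNIV])
  then show ?thesis
    unfolding sum_radial_coeff_Cons_Cons radial_gram_def
    by (cases m) (simp_all add: sum.distrib sum_distrib_left algebra_simps)
qed

lemma radial_gram_Suc:
  fixes v :: "'a::finite \<Rightarrow> real"
  shows "radial_gram v (Suc k) (Suc n) (Suc m)
     = (\<Sum>i\<in>UNIV. (v i)\<^sup>2) * radial_gram v k n m + (2 * real m + 2 - real k) * radial_gram v k n (Suc m)
       + real k * ((case m of 0 \<Rightarrow> 0 | Suc m' \<Rightarrow> (\<Sum>i\<in>UNIV. (v i)\<^sup>2) * radial_gram v (k - 1) n m')
                   + (2 * real m + real CARD('a)) * radial_gram v (k - 1) n m)"
proof -
  have "radial_gram v (Suc k) (Suc n) (Suc m)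
      = (\<Sum>J\<in>tuples UNIV k. radial_coeff v J n * (\<Sum>i\<in>UNIV. v i * radial_coeff v (i # J) (Suc m)))
        + (\<Sum>i\<in>UNIV. \<Sum>J\<in>tuples UNIV k.
            real (count (mset J) i) * (radial_coeff v (remove1 i J) n * radial_coeff v (i # J) (Suc m)))"
    by (simp add: radial_gram_def sum_tuples_Suc algebra_simps sum.distrib sum_distrib_left sum.swap[of _ UNIV])
  also have "(\<Sum>J\<in>tuples UNIV k. radial_coeff v J n * (\<Sum>i\<in>UNIV. v i * radial_coeff v (i # J) (Suc m)))
      = (\<Sum>i\<in>UNIV. (v i)\<^sup>2) * radial_gram v k n m + (2 * real m + 2 - real k) * radial_gram v k n (Suc m)"
  proof -
    have "radial_coeff v J n * (\<Sum>i\<in>UNIV. v i * radial_coeff v (i # J) (Suc m))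
        = (\<Sum>i\<in>UNIV. (v i)\<^sup>2) * (radial_coeff v J n * radial_coeff v J m)
          + (2 * real m + 2 - real k) * (radial_coeff v J n * radial_coeff v J (Suc m))"
      if "J \<in> tuples UNIV k" for J
      using that unfolding sum_mult_radial_coeff_Cons by (simp add: tuples_def algebra_simps)
    then show ?thesis
      by (simp add: radial_gram_def sum.distrib sum_distrib_left cong: sum.cong)
  qed
  also have "(\<Sum>i\<in>UNIV. \<Sum>J\<in>tuples UNIV k.
            real (count (mset J) i) * (radial_coeff v (remove1 i J) n * radial_coeff v (i # J) (Suc m)))
      = real k * ((case m of 0 \<Rightarrow> 0 | Suc m' \<Rightarrow> (\<Sum>i\<in>UNIV. (v i)\<^sup>2) * radial_gram v (k - 1) n m')
                   + (2 * real m + real CARD('a)) * radial_gram v (k - 1) n m)"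
  proof (cases k)
    case (Suc k')
    then show ?thesis
      by (simp only: diff_Suc_1 sum_count_radial_coeff_remove1_products)
  qed simp
  finally show ?thesis .
qed

lemma radial_gram_eq_if_sum_squares_eq:
  fixes v w :: "'a::finite \<Rightarrow> real"
  assumes "(\<Sum>i\<in>UNIV. (v i)\<^sup>2) = (\<Sum>i\<in>UNIV. (w i)\<^sup>2)"
  shows "radial_gram v k n m = radial_gram w k n m"
proof (induction k arbitrary: n m rule: less_induct)
  case (less k)
  show ?case
  proof (cases k)
    case (Suc k')
    show ?thesis
    proof (cases "n = 0 \<or> m = 0")
      case True
      with Suc show ?thesis
        by (auto simp: radial_gram_def sum_tuples_Suc)
    next
      case False
      then obtain n' m' where "n = Suc n'" "m = Suc m'"
        by (metis not0_implies_Suc)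
      with Suc less assms show ?thesis
        by (simp add: radial_gram_Suc split: nat.split)
    qed
  qed (simp add: radial_gram_def)
qed

section \<open>Derivatives of radial functions\<close>

lemma radial_coeff_has_real_derivative:
  "((\<lambda>t. radial_coeff (\<lambda>i. w i + (if i = j then t else 0)) I n) has_real_derivative
     (if n = 0 then 0 else real (count (mset I) j) * radial_coeff w (remove1 j I) (n - 1))) (at 0)"
proof (induction "length I" arbitrary: I n rule: less_induct)
  case less
  show ?case
  proof (cases I)
    case (Cons i J)
    show ?thesis
    proof (cases n)
      case (Suc m)
      define w' where "w' t = (\<lambda>i. w i + (if i = j then t else 0))" for t
      define D where "D K = (if m = 0 then 0 else real (count (mset K) j) * radial_coeff w (remove1 j K) (m - 1))"
        for K
      have DJ: "((\<lambda>t. radial_coeff (w' t) J m) has_real_derivative D J) (at 0)"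
        unfolding w'_def D_def by (rule less.hyps) (simp add: Cons)
      have DR: "((\<lambda>t. radial_coeff (w' t) (remove1 i J) m) has_real_derivative D (remove1 i J)) (at 0)"
        unfolding w'_def D_def by (rule less.hyps) (auto simp: Cons length_remove1)
      have "((\<lambda>t. w' t i * radial_coeff (w' t) J m + real (count (mset J) i) * radial_coeff (w' t) (remove1 i J) m)
          has_real_derivative (if i = j then 1 else 0) * radial_coeff w J m + w i * D J
            + real (count (mset J) i) * D (remove1 i J)) (at 0)"
        using DJ DR unfolding w'_def
        by (cases "i = j") (auto intro!: derivative_eq_intros)
      moreover have "(if i = j then 1 else 0) * radial_coeff w J m + w i * D J + real (count (mset J) i) * D (remove1 i J)
          = real (count (mset I) j) * radial_coeff w (remove1 j I) m"
      proof (cases m)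
        case 0
        then show ?thesis
          using count_mult_radial_coeff_remove1_Cons[of i J j w m] Cons by (simp add: D_def)
      next
        case (Suc m')
        then show ?thesis
          using count_mult_radial_coeff_remove1_Cons[of i J j w m] Cons
                count_mult_count_remove1_commute[of J i j]
          by (simp add: D_def remove1_commute algebra_simps flip: of_nat_mult)
      qed
      ultimately show ?thesis
        using Cons Suc by (simp add: w'_def)
    qed (use Cons in simp)
  qed simp
qed

definition radial_expansion :: "(nat \<Rightarrow> real \<Rightarrow> real) \<Rightarrow> nat \<Rightarrow> 'n::finite list \<Rightarrow> real^'n \<Rightarrow> real" where
  "radial_expansion c N I y = (\<Sum>n\<le>N. c n ((norm y)\<^sup>2) * radial_coeff (\<lambda>i. y $ i) I n)"

lemma vec_add_axis_nth: "(y + t *\<^sub>R axis j 1) $ i = y $ i + (if i = j then t else 0)"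
  by (simp add: axis_def)

lemma norm_add_axis_sq:
  fixes y :: "real^'n"
  shows "(norm (y + t *\<^sub>R axis j 1))\<^sup>2 = (norm y)\<^sup>2 + 2 * t * y $ j + t\<^sup>2"
proof -
  have "(norm (y + t *\<^sub>R axis j 1))\<^sup>2 = inner (y + t *\<^sub>R axis j 1) (y + t *\<^sub>R axis j 1)"
    by (rule power2_norm_eq_inner)
  also have "\<dots> = inner y y + 2 * t * inner y (axis j 1) + t\<^sup>2 * inner (axis j (1::real)) (axis j 1)"
    by (simp add: inner_add_left inner_add_right inner_commute power2_eq_square algebra_simps)
  finally show ?thesis
    by (simp add: inner_axis inner_axis_axis power2_norm_eq_inner)
qed

lemma radial_expansion_Cons:
  fixes y :: "real^'n::finite"
  assumes N: "length I < N"
  shows "radial_expansion c N (j # I) y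
       = (\<Sum>n\<le>N. c (Suc n) ((norm y)\<^sup>2) * (y $ j * radial_coeff (\<lambda>i. y $ i) I n)
            + c n ((norm y)\<^sup>2) * (if n = 0 then 0
                else real (count (mset I) j) * radial_coeff (\<lambda>i. y $ i) (remove1 j I) (n - 1)))"
proof -
  define r where "r = (norm y)\<^sup>2"
  obtain N' where N': "N = Suc N'"
    using N by (cases N) auto
  have "radial_coeff (\<lambda>i. y $ i) I N = 0"
    using N by (simp add: radial_coeff_eq_0_if_short)
  then have "(\<Sum>n\<le>N. c (Suc n) r * (y $ j * radial_coeff (\<lambda>i. y $ i) I n))
      = (\<Sum>n\<le>N'. c (Suc n) r * (y $ j * radial_coeff (\<lambda>i. y $ i) I n))"
    unfolding N' by (simp add: sum.atMost_Suc)
  moreover have "(\<Sum>n\<le>N. c n r * (if n = 0 then 0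
        else real (count (mset I) j) * radial_coeff (\<lambda>i. y $ i) (remove1 j I) (n - 1)))
      = (\<Sum>n\<le>N'. c (Suc n) r * (real (count (mset I) j) * radial_coeff (\<lambda>i. y $ i) (remove1 j I) n))"
    unfolding N' by (subst sum.atMost_Suc_shift) simp
  moreover have "radial_expansion c N (j # I) y
      = (\<Sum>n\<le>N'. c (Suc n) r * (y $ j * radial_coeff (\<lambda>i. y $ i) I n
          + real (count (mset I) j) * radial_coeff (\<lambda>i. y $ i) (remove1 j I) n))"
    unfolding radial_expansion_def r_def[symmetric] N' by (subst sum.atMost_Suc_shift) simp
  ultimately show ?thesis
    by (simp add: r_def[symmetric] sum.distrib distrib_left)
qed

lemma radial_expansion_has_real_derivative:
  fixes c :: "nat \<Rightarrow> real \<Rightarrow> real" and y :: "real^'n::finite"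
  assumes c: "\<And>n u. u > 0 \<Longrightarrow> (c n has_real_derivative c (Suc n) u / 2) (at u)"
    and y: "y \<noteq> 0" and N: "length I < N"
  shows "((\<lambda>t. radial_expansion c N I (y + t *\<^sub>R axis j 1)) has_real_derivative
           radial_expansion c N (j # I) y) (at 0)"
proof -
  define r where "r = (norm y)\<^sup>2"
  have "r > 0"
    using y by (simp add: r_def)
  define D where "D n = (if n = 0 then 0 else real (count (mset I) j) * radial_coeff (\<lambda>i. y $ i) (remove1 j I) (n - 1))"
    for n
  have "((\<lambda>t. radial_expansion c N I (y + t *\<^sub>R axis j 1)) has_real_derivative
      (\<Sum>n\<le>N. c (Suc n) r * (y $ j * radial_coeff (\<lambda>i. y $ i) I n) + c n r * D n)) (at 0)"
    unfolding radial_expansion_def norm_add_axis_sq r_def[symmetric]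
  proof (rule DERIV_sum)
    fix n
    have "(c n has_real_derivative c (Suc n) r / 2) (at (r + 2 * 0 * y $ j + 0\<^sup>2))"
      using c[of r n] \<open>r > 0\<close> by simp
    moreover have "((\<lambda>t. r + 2 * t * y $ j + t\<^sup>2) has_real_derivative 2 * y $ j) (at 0)"
      by (auto intro!: derivative_eq_intros)
    ultimately have "((\<lambda>t. c n (r + 2 * t * y $ j + t\<^sup>2)) has_real_derivative c (Suc n) r / 2 * (2 * y $ j)) (at 0)"
      by (rule DERIV_chain2)
    moreover have "((\<lambda>t. radial_coeff (\<lambda>i. (y + t *\<^sub>R axis j 1) $ i) I n) has_real_derivative D n) (at 0)"
      unfolding D_def vec_add_axis_nth by (rule radial_coeff_has_real_derivative)
    ultimately show "((\<lambda>t. c n (r + 2 * t * y $ j + t\<^sup>2) * radial_coeff (\<lambda>i. (y + t *\<^sub>R axis j 1) $ i) I n)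
        has_real_derivative c (Suc n) r * (y $ j * radial_coeff (\<lambda>i. y $ i) I n) + c n r * D n) (at 0)"
      by (auto dest: DERIV_mult simp: algebra_simps)
  qed
  then show ?thesis
    using radial_expansion_Cons[OF N] by (simp add: D_def r_def)
qed

lemma Dmulti_radial:
  fixes c :: "nat \<Rightarrow> real \<Rightarrow> real" and y :: "real^'n::finite"
  assumes c: "\<And>n u. u > 0 \<Longrightarrow> (c n has_real_derivative c (Suc n) u / 2) (at u)"
  shows "y \<noteq> 0 \<Longrightarrow> length I \<le> N \<Longrightarrow> Dmulti I (\<lambda>z. c 0 ((norm z)\<^sup>2)) y = radial_expansion c N I y"
proof (induction I arbitrary: y)
  case Nil
  have "radial_expansion c N [] y = (\<Sum>n\<le>N. if n = 0 then c 0 ((norm y)\<^sup>2) else 0)"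
    unfolding radial_expansion_def by (intro sum.cong) auto
  then show ?case
    by simp
next
  case (Cons j I)
  have "((\<lambda>t. y + t *\<^sub>R axis j 1) \<longlongrightarrow> y) (at 0)"
    by (auto intro!: tendsto_eq_intros)
  then have "\<forall>\<^sub>F t in at 0. y + t *\<^sub>R axis j 1 \<noteq> 0"
    using Cons.prems(1) by (rule tendsto_imp_eventually_ne)
  then have "\<forall>\<^sub>F t in nhds 0. Dmulti I (\<lambda>z. c 0 ((norm z)\<^sup>2)) (y + t *\<^sub>R axis j 1)
      = radial_expansion c N I (y + t *\<^sub>R axis j 1)"
    unfolding eventually_at_filter
    by eventually_elim (use Cons in \<open>auto intro!: Cons.IH\<close>)
  moreover have "((\<lambda>t. radial_expansion c N I (y + t *\<^sub>R axis j 1)) has_real_derivative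
      radial_expansion c N (j # I) y) (at 0)"
    using Cons.prems by (intro radial_expansion_has_real_derivative[where c = c] c) auto
  ultimately have "((\<lambda>t. Dmulti I (\<lambda>z. c 0 ((norm z)\<^sup>2)) (y + t *\<^sub>R axis j 1)) has_real_derivative
      radial_expansion c N (j # I) y) (at 0)"
    by (rule DERIV_cong_ev[THEN iffD2, OF refl _ refl])
  then show ?case
    by (simp add: partial_coord_def DERIV_imp_deriv)
qed

section \<open>Evaluation on a coordinate axis\<close>

text \<open>The moments \<open>E Z\<^sup>m\<close> of a standard Gaussian \<open>Z\<close>.\<close>
fun gauss_moment :: "nat \<Rightarrow> real" where
  "gauss_moment 0 = 1"
| "gauss_moment (Suc 0) = 0"
| "gauss_moment (Suc (Suc m)) = real (Suc m) * gauss_moment m"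

lemma gauss_moment_odd: "odd m \<Longrightarrow> gauss_moment m = 0"
  by (induction m rule: gauss_moment.induct) auto

lemma gauss_moment_Suc: "gauss_moment (Suc m) = real m * gauss_moment (m - 1)"
  by (cases m) auto

lemma gauss_moment_even: "gauss_moment (2 * p) = fact (2 * p) / (fact p * 2 ^ p)"
proof (induction p)
  case (Suc p)
  have two: "2 * Suc p = Suc (Suc (2 * p))"
    by simp
  have "gauss_moment (2 * Suc p) = real (Suc (2 * p)) * gauss_moment (2 * p)"
    by (simp add: gauss_moment_Suc)
  also have "\<dots> = real (Suc (2 * p)) * fact (2 * p) / (fact p * 2 ^ p)"
    using Suc by simp
  also have "\<dots> = (2 * real (Suc p) * (real (Suc (2 * p)) * fact (2 * p)))
      / (2 * real (Suc p) * (fact p * 2 ^ p))"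
    by (subst mult_divide_mult_cancel_left) simp_all
  also have "\<dots> = fact (2 * Suc p) / (fact (Suc p) * 2 ^ Suc p)"
    unfolding two by (simp add: algebra_simps)
  finally show ?case .
qed simp

lemma gauss_moment_even_sq:
  "(gauss_moment (2 * p))\<^sup>2 = fact (2 * p) * (-1) ^ p * ((-1/2) gchoose p)"
proof (induction p)
  case (Suc p)
  have two: "2 * Suc p = Suc (Suc (2 * p))"
    by simp
  have gchoose_Suc: "((-1/2::real) gchoose Suc p) = ((-1/2) gchoose p) * ((-1/2 - real p) / real (Suc p))"
    using gbinomial_rec[of "-3/2 - real p + 0" p]
    by (simp add: gbinomial_pochhammer pochhammer_Suc field_simps)
  have "(gauss_moment (2 * Suc p))\<^sup>2 = (real (Suc (2 * p)))\<^sup>2 * (gauss_moment (2 * p))\<^sup>2"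
    unfolding two by (simp add: power_mult_distrib)
  also have "\<dots> = (real (Suc (2 * p)))\<^sup>2 * (fact (2 * p) * (-1) ^ p * ((-1/2) gchoose p))"
    by (simp only: Suc)
  also have "\<dots> = fact (2 * Suc p) * (-1) ^ Suc p * (((-1/2) gchoose p) * ((-1/2 - real p) / real (Suc p)))"
    unfolding two by (simp add: field_simps power2_eq_square)
  finally show ?case
    by (simp only: gchoose_Suc)
qed simp

definition axial :: "'a \<Rightarrow> real \<Rightarrow> 'a \<Rightarrow> real" where
  "axial a \<rho> i = (if i = a then \<rho> else 0)"

definition off_axis_moments :: "'a::finite \<Rightarrow> 'a list \<Rightarrow> real" where
  "off_axis_moments a I = (\<Prod>j\<in>UNIV - {a}. gauss_moment (count (mset I) j))"

text \<open>The value of \<open>radial_coeff (axial a \<rho>) I n\<close> up to the factor \<open>off_axis_moments a I\<close>, for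
  \<open>c\<close> occurrences of \<open>a\<close> in \<open>I\<close> and \<open>length I = d\<close>: of the \<open>c\<close> factors \<open>\<partial>\<^sub>a\<close>, \<open>t = 2 n - d\<close> hit
  \<open>\<rho>\<close> and the remaining ones are paired up.\<close>
definition axial_coeff :: "real \<Rightarrow> nat \<Rightarrow> nat \<Rightarrow> nat \<Rightarrow> real" where
  "axial_coeff \<rho> c d n =
     (if d \<le> 2 * n then real (c choose (2 * n - d)) * gauss_moment (c - (2 * n - d)) * \<rho> ^ (2 * n - d)
      else 0)"

lemma choose_mult_gauss_moment_Suc:
  "real (Suc c choose Suc t) * gauss_moment (c - t)
   = real (c choose t) * gauss_moment (c - t) + real c * (real ((c - 1) choose Suc t) * gauss_moment (c - 1 - Suc t))"
proof (cases "t < c")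
  case True
  then have "c - t = Suc (c - Suc t)"
    by simp
  then have "real (c choose Suc t) * gauss_moment (c - t)
      = real ((c - Suc t) * (c choose Suc t)) * gauss_moment (c - 1 - Suc t)"
    by (simp add: gauss_moment_Suc)
  also have "\<dots> = real c * (real ((c - 1) choose Suc t) * gauss_moment (c - 1 - Suc t))"
    by (simp only: binomial_absorb_comp) simp
  finally show ?thesis
    by (simp add: algebra_simps)
qed (simp add: binomial_eq_0)

lemma axial_coeff_Suc:
  assumes "c \<le> d"
  shows "axial_coeff \<rho> (Suc c) (Suc d) (Suc m)
       = \<rho> * axial_coeff \<rho> c d m + real c * axial_coeff \<rho> (c - 1) (d - 1) m"
proof -
  consider "d \<le> 2 * m" | "d = Suc (2 * m)" | "d > Suc (2 * m)"
    by linarith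
  then show ?thesis
  proof cases
    case 1
    then obtain t where t: "2 * m = d + t"
      using le_Suc_ex by blast
    have "axial_coeff \<rho> (Suc c) (Suc d) (Suc m) = real (Suc c choose Suc t) * gauss_moment (c - t) * \<rho> ^ Suc t"
      using t by (simp add: axial_coeff_def)
    moreover have "axial_coeff \<rho> c d m = real (c choose t) * gauss_moment (c - t) * \<rho> ^ t"
      using t by (simp add: axial_coeff_def)
    moreover have "real c * axial_coeff \<rho> (c - 1) (d - 1) m
        = real c * (real ((c - 1) choose Suc t) * gauss_moment (c - 1 - Suc t) * \<rho> ^ Suc t)"
      using t assms by (cases c) (auto simp: axial_coeff_def)
    ultimately show ?thesis
      by (simp only: choose_mult_gauss_moment_Suc) (simp add: algebra_simps)
  next
    case 2
    then show ?thesis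
      by (simp add: axial_coeff_def gauss_moment_Suc)
  qed (auto simp: axial_coeff_def)
qed

lemma axial_coeff_add2: "axial_coeff \<rho> c (d + 2) (Suc m) = axial_coeff \<rho> c d m"
  by (simp add: axial_coeff_def)

lemma off_axis_moments_Cons_axis: "off_axis_moments a (a # J) = off_axis_moments a J"
  unfolding off_axis_moments_def by (intro prod.cong) auto

lemma off_axis_moments_remove1_axis: "off_axis_moments a (remove1 a J) = off_axis_moments a J"
  unfolding off_axis_moments_def by (intro prod.cong) (auto simp: mset_remove1)

lemma off_axis_moments_Cons:
  fixes a :: "'a::finite"
  assumes "i \<noteq> a"
  shows "off_axis_moments a (i # J) = real (count (mset J) i) * off_axis_moments a (remove1 i J)"
proof -
  have i: "i \<in> UNIV - {a}"
    using assms by simp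
  have "off_axis_moments a (i # J) = gauss_moment (Suc (count (mset J) i))
      * (\<Prod>j\<in>UNIV - {a} - {i}. gauss_moment (count (mset (remove1 i J)) j))"
    unfolding off_axis_moments_def prod.remove[OF finite i]
    by (intro arg_cong2[where f = "(*)"] prod.cong) (auto simp: mset_remove1)
  also have "\<dots> = real (count (mset J) i) * off_axis_moments a (remove1 i J)"
    unfolding off_axis_moments_def prod.remove[OF finite i]
    by (simp add: gauss_moment_Suc mset_remove1)
  finally show ?thesis .
qed

lemma radial_coeff_axial:
  fixes a :: "'a::finite"
  shows "radial_coeff (axial a \<rho>) I n = off_axis_moments a I * axial_coeff \<rho> (count (mset I) a) (length I) n"
proof (induction "length I" arbitrary: I n rule: less_induct)
  case less
  show ?case
  proof (cases I)
    case Nil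
    then show ?thesis
      by (simp add: off_axis_moments_def axial_coeff_def)
  next
    case (Cons i J)
    show ?thesis
    proof (cases n)
      case 0
      with Cons show ?thesis
        by (simp add: axial_coeff_def)
    next
      case (Suc m)
      show ?thesis
      proof (cases "i = a")
        case True
        define c where "c = count (mset J) a"
        have IH: "radial_coeff (axial a \<rho>) J m = off_axis_moments a J * axial_coeff \<rho> c (length J) m"
          using less.hyps Cons c_def by simp
        have IH_remove1: "real c * radial_coeff (axial a \<rho>) (remove1 a J) m
            = real c * (off_axis_moments a J * axial_coeff \<rho> (c - 1) (length J - 1) m)"
        proof (cases "a \<in> set J")
          case True
          then show ?thesis
            using less.hyps[of "remove1 a J" m] Cons
            by (simp add: c_def length_remove1 mset_remove1 off_axis_moments_remove1_axis)
        qed (simp add: c_def)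
        have "c \<le> length J"
          by (simp add: c_def count_mset count_le_length)
        then show ?thesis
          using Cons True Suc IH IH_remove1
          by (simp add: axial_def off_axis_moments_Cons_axis axial_coeff_Suc c_def[symmetric] algebra_simps)
      next
        case False
        show ?thesis
        proof (cases "i \<in> set J")
          case True
          have "radial_coeff (axial a \<rho>) (remove1 i J) m
              = off_axis_moments a (remove1 i J) * axial_coeff \<rho> (count (mset J) a) (length J - 1) m"
            using less.hyps[of "remove1 i J" m] Cons False True by (simp add: length_remove1 mset_remove1)
          moreover have "Suc (length J) = (length J - 1) + 2"
            using True by (cases J) auto
          ultimately show ?thesis
            using Cons False Suc axial_coeff_add2[of \<rho> "count (mset J) a" "length J - 1" m]
            by (simp add: axial_def off_axis_moments_Cons)
        qed (use Cons False Suc in \<open>simp add: axial_def off_axis_moments_Cons\<close>)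
      qed
    qed
  qed
qed

text \<open>\<open>m!\<close> times the coefficient of \<open>X ^ m\<close> in \<open>(1 - X\<^sup>2) powr (- M / 2)\<close>, the \<open>M\<close>-th power of
  the exponential generating function \<open>\<Sum>m. (gauss_moment m)\<^sup>2 * X ^ m / m!\<close>.\<close>
definition moment_sq_sum :: "nat \<Rightarrow> nat \<Rightarrow> real" where
  "moment_sq_sum M m =
     (if even m then fact m * (-1) ^ (m div 2) * ((- real M / 2) gchoose (m div 2)) else 0)"

lemma moment_sq_sum_convolution_summand:
  assumes m: "m = 2 * L" and "u \<le> L"
  shows "real (m choose (2 * u)) * (gauss_moment (m - 2 * u))\<^sup>2 * moment_sq_sum M (2 * u)
       = fact m * (-1) ^ L * (((- real M / 2) gchoose u) * ((-1/2) gchoose (L - u)))"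
proof -
  have two: "m - 2 * u = 2 * (L - u)"
    using m by simp
  have fact: "real (m choose (2 * u)) * fact (2 * u) * fact (2 * (L - u)) = fact m"
    using choose_mult_fact_mult_fact[of "2 * u" m] assms two by simp
  have sign: "(-1::real) ^ (L - u) * (-1) ^ u = (-1) ^ L"
    using assms by (simp flip: power_add)
  have "real (m choose (2 * u)) * (gauss_moment (m - 2 * u))\<^sup>2 * moment_sq_sum M (2 * u)
      = (real (m choose (2 * u)) * fact (2 * u) * fact (2 * (L - u))) * ((-1) ^ (L - u) * (-1) ^ u)
        * (((- real M / 2) gchoose u) * ((-1/2) gchoose (L - u)))"
    unfolding two gauss_moment_even_sq by (simp add: moment_sq_sum_def algebra_simps)
  then show ?thesis
    unfolding fact sign by simp
qed

lemma moment_sq_sum_Suc: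
  "(\<Sum>t\<le>m. real (m choose t) * (gauss_moment (m - t))\<^sup>2 * moment_sq_sum M t) = moment_sq_sum (Suc M) m"
proof (cases "even m")
  case False
  have "real (m choose t) * (gauss_moment (m - t))\<^sup>2 * moment_sq_sum M t = 0" for t
    using False by (cases "t \<le> m") (auto simp: moment_sq_sum_def gauss_moment_odd)
  then have "(\<Sum>t\<le>m. real (m choose t) * (gauss_moment (m - t))\<^sup>2 * moment_sq_sum M t) = 0"
    by (intro sum.neutral ballI)
  moreover have "moment_sq_sum (Suc M) m = 0"
    using False by (simp add: moment_sq_sum_def)
  ultimately show ?thesis
    by simp
next
  case True
  then obtain L where m: "m = 2 * L"
    by blast
  have "(\<Sum>t\<le>m. real (m choose t) * (gauss_moment (m - t))\<^sup>2 * moment_sq_sum M t)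
      = (\<Sum>u = 0..m div 2. real (m choose (2 * u)) * (gauss_moment (m - 2 * u))\<^sup>2 * moment_sq_sum M (2 * u))"
    by (rule sum_atMost_eq_sum_even) (simp add: moment_sq_sum_def)
  also have "\<dots> = (\<Sum>u = 0..L. fact m * (-1) ^ L * (((- real M / 2) gchoose u) * ((-1/2) gchoose (L - u))))"
    using m by (intro sum.cong) (simp_all add: moment_sq_sum_convolution_summand)
  also have "\<dots> = fact m * (-1) ^ L * ((- real M / 2 + -1/2) gchoose L)"
    by (simp only: sum_distrib_left[symmetric] gbinomial_Vandermonde)
  also have "\<dots> = moment_sq_sum (Suc M) m"
    using m by (simp add: moment_sq_sum_def field_simps)
  finally show ?thesis .
qed

lemma sum_tuples_moments_sq:
  assumes "finite B"
  shows "(\<Sum>J\<in>tuples B m. (\<Prod>j\<in>B. gauss_moment (count (mset J) j))\<^sup>2) = moment_sq_sum (card B) m"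
  using assms
proof (induction B arbitrary: m rule: finite_induct)
  case empty
  have "tuples {} m = (if m = 0 then {[]} else {})"
    by (auto simp: tuples_def)
  then show ?case
    by (cases m) (auto simp: moment_sq_sum_def gbinomial_0_left)
next
  case (insert b B)
  have "(\<Sum>J\<in>tuples (insert b B) m. (\<Prod>j\<in>insert b B. gauss_moment (count (mset J) j))\<^sup>2)
      = (\<Sum>I\<in>tuples (insert b B) m. (\<lambda>c J. (gauss_moment c)\<^sup>2 * (\<Prod>j\<in>B. gauss_moment (count (mset J) j))\<^sup>2)
            (count (mset I) b) (filter (\<lambda>x. x \<noteq> b) I))"
  proof (intro sum.cong refl)
    fix I :: "'a list"
    have "(\<Prod>j\<in>B. gauss_moment (count (mset (filter (\<lambda>x. x \<noteq> b) I)) j))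
        = (\<Prod>j\<in>B. gauss_moment (count (mset I) j))"
      using insert.hyps by (intro prod.cong refl) auto
    then show "(\<Prod>j\<in>insert b B. gauss_moment (count (mset I) j))\<^sup>2
        = (\<lambda>c J. (gauss_moment c)\<^sup>2 * (\<Prod>j\<in>B. gauss_moment (count (mset J) j))\<^sup>2)
            (count (mset I) b) (filter (\<lambda>x. x \<noteq> b) I)"
      using insert.hyps by (simp add: power_mult_distrib)
  qed
  also have "\<dots> = (\<Sum>t\<le>m. real (m choose t) * (\<Sum>J\<in>tuples B t.
        (gauss_moment (m - t))\<^sup>2 * (\<Prod>j\<in>B. gauss_moment (count (mset J) j))\<^sup>2))"
    by (rule sum_tuples_insert_by_count[OF insert.hyps(1,2)])
  also have "\<dots> = (\<Sum>t\<le>m. real (m choose t) * (gauss_moment (m - t))\<^sup>2 * moment_sq_sum (card B) t)"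
    by (simp only: sum_distrib_left[symmetric] insert.IH mult.assoc)
  also have "\<dots> = moment_sq_sum (card (insert b B)) m"
    using insert.hyps by (simp add: moment_sq_sum_Suc)
  finally show ?case .
qed

section \<open>The norm of the gradient\<close>

lemma sum_power2_radial_coeff_axial:
  fixes v :: "'a::finite \<Rightarrow> real" and b :: 'a
  assumes "(\<Sum>i\<in>UNIV. (v i)\<^sup>2) = \<rho>\<^sup>2"
  shows "(\<Sum>I\<in>tuples UNIV k. (\<Sum>n\<le>N. a n * radial_coeff v I n)\<^sup>2)
       = (\<Sum>I\<in>tuples UNIV k. (\<Sum>n\<le>N. a n * radial_coeff (axial b \<rho>) I n)\<^sup>2)"
proof -
  have "(\<Sum>i\<in>UNIV. (axial b \<rho> i)\<^sup>2) = \<rho>\<^sup>2"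
    by (simp add: axial_def if_distrib[of "\<lambda>x. x\<^sup>2"] cong: if_cong)
  then have "radial_gram v k n n' = radial_gram (axial b \<rho>) k n n'" for n n'
    using assms by (intro radial_gram_eq_if_sum_squares_eq) simp
  then show ?thesis
    by (simp only: sum_power2_linear_combination flip: radial_gram_def)
qed

lemma sum_power2_axial_expansion:
  fixes b :: "'a::finite"
  shows "(\<Sum>I\<in>tuples UNIV k. (\<Sum>n\<le>N. a n * radial_coeff (axial b \<rho>) I n)\<^sup>2)
       = (\<Sum>m\<le>k. real (k choose m) * moment_sq_sum (CARD('a) - 1) m
            * (\<Sum>n\<le>N. a n * axial_coeff \<rho> (k - m) k n)\<^sup>2)"
proof -
  define B where "B = UNIV - {b}"
  have UNIV: "UNIV = insert b B" and "finite B" "b \<notin> B" "card B = CARD('a) - 1"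
    by (auto simp: B_def card_Diff_singleton)
  define Y where "Y c = (\<Sum>n\<le>N. a n * axial_coeff \<rho> c k n)" for c
  have "(\<Sum>n\<le>N. a n * radial_coeff (axial b \<rho>) I n)\<^sup>2
      = (\<Prod>j\<in>B. gauss_moment (count (mset (filter (\<lambda>x. x \<noteq> b) I)) j))\<^sup>2 * (Y (count (mset I) b))\<^sup>2"
    if "I \<in> tuples UNIV k" for I
  proof -
    have "off_axis_moments b I = (\<Prod>j\<in>B. gauss_moment (count (mset (filter (\<lambda>x. x \<noteq> b) I)) j))"
      unfolding off_axis_moments_def B_def by (intro prod.cong) auto
    moreover have "(\<Sum>n\<le>N. a n * radial_coeff (axial b \<rho>) I n) = off_axis_moments b I * Y (count (mset I) b)"
      using that by (simp add: radial_coeff_axial Y_def tuples_def sum_distrib_left algebra_simps)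
    ultimately show ?thesis
      by (simp add: power_mult_distrib)
  qed
  then have "(\<Sum>I\<in>tuples UNIV k. (\<Sum>n\<le>N. a n * radial_coeff (axial b \<rho>) I n)\<^sup>2)
      = (\<Sum>I\<in>tuples (insert b B) k. (\<lambda>c J. (\<Prod>j\<in>B. gauss_moment (count (mset J) j))\<^sup>2 * (Y c)\<^sup>2)
            (count (mset I) b) (filter (\<lambda>x. x \<noteq> b) I))"
    unfolding UNIV[symmetric] by (intro sum.cong) auto
  also have "\<dots> = (\<Sum>m\<le>k. real (k choose m) * (\<Sum>J\<in>tuples B m. (\<Prod>j\<in>B. gauss_moment (count (mset J) j))\<^sup>2 * (Y (k - m))\<^sup>2))"
    using \<open>finite B\<close> \<open>b \<notin> B\<close> by (rule sum_tuples_insert_by_count)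
  also have "\<dots> = (\<Sum>m\<le>k. real (k choose m) * moment_sq_sum (CARD('a) - 1) m * (Y (k - m))\<^sup>2)"
    using \<open>finite B\<close> \<open>card B = CARD('a) - 1\<close>
    by (simp only: sum_distrib_right[symmetric] sum_tuples_moments_sq mult.assoc)
  finally show ?thesis
    by (simp add: Y_def)
qed

lemma grad_norm_radial_sq:
  fixes c :: "nat \<Rightarrow> real \<Rightarrow> real" and x :: "real^'n::finite"
  assumes c: "\<And>n u. u > 0 \<Longrightarrow> (c n has_real_derivative c (Suc n) u / 2) (at u)"
    and x: "x \<noteq> 0"
  shows "(grad_norm k (\<lambda>z. c 0 ((norm z)\<^sup>2)) x)\<^sup>2
       = (\<Sum>m\<le>k. real (k choose m) * moment_sq_sum (CARD('n) - 1) m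
            * (\<Sum>n\<le>k. c n ((norm x)\<^sup>2) * axial_coeff (norm x) (k - m) k n)\<^sup>2)"
proof -
  have tuples: "tuples UNIV k = {I :: 'n list. length I = k}"
    by (simp add: tuples_def)
  have "(\<Sum>i\<in>UNIV. (x $ i)\<^sup>2) = (norm x)\<^sup>2"
    unfolding power2_norm_eq_inner by (simp add: inner_vec_def power2_eq_square)
  have "(grad_norm k (\<lambda>z. c 0 ((norm z)\<^sup>2)) x)\<^sup>2 = (\<Sum>I\<in>tuples UNIV k. (Dmulti I (\<lambda>z. c 0 ((norm z)\<^sup>2)) x)\<^sup>2)"
    unfolding grad_norm_def tuples by (simp add: sum_nonneg)
  also have "\<dots> = (\<Sum>I\<in>tuples UNIV k. (\<Sum>n\<le>k. c n ((norm x)\<^sup>2) * radial_coeff (\<lambda>i. x $ i) I n)\<^sup>2)"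
    by (intro sum.cong refl) (simp add: Dmulti_radial[where c = c and N = k, OF c x] tuples_def radial_expansion_def)
  also have "\<dots> = (\<Sum>I\<in>tuples UNIV k. (\<Sum>n\<le>k. c n ((norm x)\<^sup>2) * radial_coeff (axial (undefined :: 'n) (norm x)) I n)\<^sup>2)"
    \<comment> \<open>any coordinate axis will do\<close>
    by (rule sum_power2_radial_coeff_axial) fact
  also have "\<dots> = (\<Sum>m\<le>k. real (k choose m) * moment_sq_sum (CARD('n) - 1) m
            * (\<Sum>n\<le>k. c n ((norm x)\<^sup>2) * axial_coeff (norm x) (k - m) k n)\<^sup>2)"
    by (rule sum_power2_axial_expansion)
  finally show ?thesis .
qed

lemma axial_coeff_closed_form:
  "axial_coeff \<rho> (t + 2 * p) (t + 2 * p + 2 * L) (t + p + L) = fact (t + 2 * p) / (fact t * fact p * 2 ^ p) * \<rho> ^ t"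
proof -
  have "axial_coeff \<rho> (t + 2 * p) (t + 2 * p + 2 * L) (t + p + L)
      = real (t + 2 * p choose t) * gauss_moment (2 * p) * \<rho> ^ t"
    by (simp add: axial_coeff_def)
  also have "real (t + 2 * p choose t) = fact (t + 2 * p) / (fact t * fact (2 * p))"
    using binomial_fact[of t "t + 2 * p", where 'a = real] by simp
  finally show ?thesis
    unfolding gauss_moment_even by simp
qed

definition bracket_sum :: "(nat \<Rightarrow> real) \<Rightarrow> nat \<Rightarrow> nat \<Rightarrow> real" where
  "bracket_sum g k l = (\<Sum>n = (k + 1) div 2..k - l. 2 ^ (2*n + l - k) * g n
                  * real (n choose (k - n)) * real ((k - n) choose l))"

lemma bracket_summand_eq:
  fixes g :: "nat \<Rightarrow> real"
  assumes \<rho>: "\<rho> > 0"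
  shows "2 ^ (t + p + L) * fact (t + p + L) * g (t + p + L) * \<rho> powr (e - 2 * real (t + p + L))
           * (fact (t + 2 * p) / (fact t * fact p * 2 ^ p) * \<rho> ^ t)
       = \<rho> powr (e - real (t + 2 * p + 2 * L)) * (fact (t + 2 * p) * fact L)
           * (2 ^ (t + L) * g (t + p + L) * real ((t + p + L) choose (p + L)) * real ((p + L) choose L))"
proof -
  have powr: "\<rho> powr (e - 2 * real (t + p + L)) * \<rho> ^ t = \<rho> powr (e - real (t + 2 * p + 2 * L))"
    using \<rho> by (simp add: powr_realpow[symmetric] powr_add[symmetric] algebra_simps)
  have choose1: "real ((t + p + L) choose (p + L)) = fact (t + p + L) / (fact (p + L) * fact t)"
    using binomial_fact[of "p + L" "t + p + L", where 'a = real] by (simp add: algebra_simps)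
  have choose2: "real ((p + L) choose L) = fact (p + L) / (fact L * fact p)"
    using binomial_fact[of L "p + L", where 'a = real] by simp
  have "2 ^ (t + p + L) * fact (t + p + L) * g (t + p + L) * \<rho> powr (e - 2 * real (t + p + L))
          * (fact (t + 2 * p) / (fact t * fact p * 2 ^ p) * \<rho> ^ t)
      = (2 ^ p * 2 ^ (t + L)) * fact (t + p + L) * g (t + p + L)
          * (\<rho> powr (e - 2 * real (t + p + L)) * \<rho> ^ t) * (fact (t + 2 * p) / (fact t * fact p * 2 ^ p))"
    by (simp add: power_add[symmetric] algebra_simps)
  also have "\<dots> = \<rho> powr (e - real (t + 2 * p + 2 * L)) * (fact (t + 2 * p) * fact L)
      * (2 ^ (t + L) * g (t + p + L) * (fact (t + p + L) / (fact (p + L) * fact t))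
         * (fact (p + L) / (fact L * fact p)))"
    unfolding powr by (simp add: field_simps)
  finally show ?thesis
    unfolding choose1 choose2 .
qed

lemma axial_expansion_closed_form:
  fixes c :: "nat \<Rightarrow> real \<Rightarrow> real" and g :: "nat \<Rightarrow> real"
  assumes \<rho>: "\<rho> > 0"
    and c: "\<And>n. k \<le> 2 * n \<Longrightarrow> c n (\<rho>\<^sup>2) = \<sigma> * 2 ^ n * fact n * g n * \<rho> powr (e - 2 * real n)"
    and L: "L \<le> k div 2"
  shows "(\<Sum>n\<le>k. c n (\<rho>\<^sup>2) * axial_coeff \<rho> (k - 2 * L) k n)
       = \<sigma> * \<rho> powr (e - real k) * (fact (k - 2 * L) * fact L) * bracket_sum g k L"
proof -
  have "(\<Sum>n\<le>k. c n (\<rho>\<^sup>2) * axial_coeff \<rho> (k - 2 * L) k n)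
      = (\<Sum>n = (k + 1) div 2..k - L. \<sigma> * \<rho> powr (e - real k) * (fact (k - 2 * L) * fact L)
          * (2 ^ (2 * n + L - k) * g n * real (n choose (k - n)) * real ((k - n) choose L)))"
  proof (rule sum.mono_neutral_cong_right)
    show "\<forall>n\<in>{..k} - {(k + 1) div 2..k - L}. c n (\<rho>\<^sup>2) * axial_coeff \<rho> (k - 2 * L) k n = 0"
      using L by (auto simp: axial_coeff_def binomial_eq_0)
    fix n
    assume n_range: "n \<in> {(k + 1) div 2..k - L}"
    define t p where "t = 2 * n - k" and "p = k - n - L"
    have n: "n = t + p + L" and k: "k = t + 2 * p + 2 * L"
      using n_range L by (auto simp: t_def p_def)
    have "c n (\<rho>\<^sup>2) = \<sigma> * 2 ^ n * fact n * g n * \<rho> powr (e - 2 * real n)"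
      using n k by (intro c) simp
    moreover have "axial_coeff \<rho> (k - 2 * L) k n = fact (t + 2 * p) / (fact t * fact p * 2 ^ p) * \<rho> ^ t"
      unfolding n k by (simp add: axial_coeff_closed_form)
    moreover have "2 * n + L - k = t + L" "k - n = p + L" "k - 2 * L = t + 2 * p"
      using n k by simp_all
    ultimately show "c n (\<rho>\<^sup>2) * axial_coeff \<rho> (k - 2 * L) k n
        = \<sigma> * \<rho> powr (e - real k) * (fact (k - 2 * L) * fact L)
          * (2 ^ (2 * n + L - k) * g n * real (n choose (k - n)) * real ((k - n) choose L))"
      using bracket_summand_eq[OF \<rho>, of t p L g e] by (simp add: n k algebra_simps)
  qed auto
  then show ?thesis
    by (simp add: bracket_sum_def sum_distrib_left mult.assoc)
qed

lemma moment_sq_sum_even: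
  assumes "N > 0"
  shows "moment_sq_sum (N - 1) (2 * L) = fact (2 * L) * falling ((real N - 3) / 2 + real L) L / fact L"
proof -
  define a where "a = real (N - 1) / 2"
  have "(- real (N - 1) / 2 gchoose L) = (-1) ^ L * pochhammer a L / fact L"
    using gbinomial_pochhammer[of "- a" L] by (simp add: a_def)
  moreover have "falling ((real N - 3) / 2 + real L) L = pochhammer a L"
    using assms falling_eq_pochhammer[of a L] by (simp add: a_def of_nat_diff field_simps)
  moreover have "(-1::real) ^ L * (-1) ^ L = 1"
    by (simp flip: power_mult_distrib)
  ultimately show ?thesis
    by (simp add: moment_sq_sum_def)
qed

lemma scaled_axial_expansion_summand_eq:
  fixes c :: "nat \<Rightarrow> real \<Rightarrow> real" and g :: "nat \<Rightarrow> real"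
  assumes \<rho>: "\<rho> > 0"
    and c: "\<And>n. k \<le> 2 * n \<Longrightarrow> c n (\<rho>\<^sup>2) = \<sigma> * 2 ^ n * fact n * g n * \<rho> powr (e - 2 * real n)"
    and \<sigma>: "\<sigma>\<^sup>2 = 1" and l: "l \<le> k div 2" and N: "N > 0"
  shows "(\<rho> powr (real k - e))\<^sup>2 * (real (k choose (2 * l)) * moment_sq_sum (N - 1) (2 * l)
           * (\<Sum>n\<le>k. c n (\<rho>\<^sup>2) * axial_coeff \<rho> (k - 2 * l) k n)\<^sup>2)
       = fact k * (fact (k - 2 * l) * fact l * falling ((real N - 3) / 2 + real l) l * (bracket_sum g k l)\<^sup>2)"
proof -
  have powr: "(\<rho> powr (real k - e) * \<rho> powr (e - real k))\<^sup>2 = 1"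
    using \<rho> by (simp flip: powr_add)
  have fact: "real (k choose (2 * l)) * fact (2 * l) * fact (k - 2 * l) = fact k"
    using l by (intro choose_mult_fact_mult_fact) auto
  have Y: "(\<Sum>n\<le>k. c n (\<rho>\<^sup>2) * axial_coeff \<rho> (k - 2 * l) k n)
      = \<sigma> * \<rho> powr (e - real k) * (fact (k - 2 * l) * fact l) * bracket_sum g k l"
    using l by (intro axial_expansion_closed_form[OF \<rho>] c) auto
  have "(\<rho> powr (real k - e))\<^sup>2 * (real (k choose (2 * l)) * moment_sq_sum (N - 1) (2 * l)
         * (\<Sum>n\<le>k. c n (\<rho>\<^sup>2) * axial_coeff \<rho> (k - 2 * l) k n)\<^sup>2)
      = (real (k choose (2 * l)) * fact (2 * l) * fact (k - 2 * l))
        * (fact (k - 2 * l) * fact l * falling ((real N - 3) / 2 + real l) l * (bracket_sum g k l)\<^sup>2)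
        * (\<sigma>\<^sup>2 * (\<rho> powr (real k - e) * \<rho> powr (e - real k))\<^sup>2)"
    unfolding Y moment_sq_sum_even[OF N]
    by (simp add: power_mult_distrib power2_eq_square)
  then show ?thesis
    unfolding fact powr \<sigma> by simp
qed

lemma grad_norm_radial_closed_form:
  fixes c :: "nat \<Rightarrow> real \<Rightarrow> real" and g :: "nat \<Rightarrow> real" and x :: "real^'n::finite"
  assumes c: "\<And>n u. u > 0 \<Longrightarrow> (c n has_real_derivative c (Suc n) u / 2) (at u)"
    and x: "x \<noteq> 0"
    and c_x: "\<And>n. k \<le> 2 * n \<Longrightarrow> c n ((norm x)\<^sup>2) = \<sigma> * 2 ^ n * fact n * g n * norm x powr (e - 2 * real n)"
    and \<sigma>: "\<sigma>\<^sup>2 = 1"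
  shows "(norm x powr (real k - e) * grad_norm k (\<lambda>z. c 0 ((norm z)\<^sup>2)) x)\<^sup>2
     = fact k * (\<Sum>l = 0..k div 2. fact (k - 2 * l) * fact l
                   * falling ((real CARD('n) - 3) / 2 + real l) l * (bracket_sum g k l)\<^sup>2)"
proof -
  have summand: "(norm x powr (real k - e))\<^sup>2 * (real (k choose (2 * l)) * moment_sq_sum (CARD('n) - 1) (2 * l)
         * (\<Sum>n\<le>k. c n ((norm x)\<^sup>2) * axial_coeff (norm x) (k - 2 * l) k n)\<^sup>2)
      = fact k * (fact (k - 2 * l) * fact l * falling ((real CARD('n) - 3) / 2 + real l) l * (bracket_sum g k l)\<^sup>2)"
    if "l \<in> {0..k div 2}" for l
    using x that by (intro scaled_axial_expansion_summand_eq[where \<sigma> = \<sigma>] c_x \<sigma>) auto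
  have "(grad_norm k (\<lambda>z. c 0 ((norm z)\<^sup>2)) x)\<^sup>2
      = (\<Sum>l = 0..k div 2. real (k choose (2 * l)) * moment_sq_sum (CARD('n) - 1) (2 * l)
          * (\<Sum>n\<le>k. c n ((norm x)\<^sup>2) * axial_coeff (norm x) (k - 2 * l) k n)\<^sup>2)"
  proof -
    have "(grad_norm k (\<lambda>z. c 0 ((norm z)\<^sup>2)) x)\<^sup>2 = (\<Sum>m\<le>k. real (k choose m) * moment_sq_sum (CARD('n) - 1) m
            * (\<Sum>n\<le>k. c n ((norm x)\<^sup>2) * axial_coeff (norm x) (k - m) k n)\<^sup>2)"
      by (rule grad_norm_radial_sq) (rule c, assumption, rule x)
    then show ?thesis
      by (simp add: sum_atMost_eq_sum_even moment_sq_sum_def)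
  qed
  then have "(norm x powr (real k - e) * grad_norm k (\<lambda>z. c 0 ((norm z)\<^sup>2)) x)\<^sup>2
      = (\<Sum>l = 0..k div 2. (norm x powr (real k - e))\<^sup>2 * (real (k choose (2 * l))
          * moment_sq_sum (CARD('n) - 1) (2 * l) * (\<Sum>n\<le>k. c n ((norm x)\<^sup>2) * axial_coeff (norm x) (k - 2 * l) k n)\<^sup>2))"
    by (simp add: power_mult_distrib sum_distrib_left)
  also have "\<dots> = (\<Sum>l = 0..k div 2. fact k * (fact (k - 2 * l) * fact l
                   * falling ((real CARD('n) - 3) / 2 + real l) l * (bracket_sum g k l)\<^sup>2))"
    by (rule sum.cong[OF refl summand])
  finally show ?thesis
    by (simp add: sum_distrib_left)
qed

section \<open>Powers and the logarithm of the norm\<close>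

text \<open>\<open>power_radial_coeffs s n u = 2 ^ n * (d/du) ^ n (u powr (s / 2))\<close> for \<open>u > 0\<close>.\<close>
definition power_radial_coeffs :: "real \<Rightarrow> nat \<Rightarrow> real \<Rightarrow> real" where
  "power_radial_coeffs s n u = (\<Prod>i<n. s - 2 * real i) * sqrt u powr (s - 2 * real n)"

lemma has_real_derivative_sqrt_powr:
  assumes "u > 0"
  shows "((\<lambda>u. sqrt u powr a) has_real_derivative a * sqrt u powr (a - 2) / 2) (at u)"
proof -
  have "sqrt u > 0"
    using assms by simp
  have "sqrt u powr (a - 2) = sqrt u powr (a - 1) / sqrt u powr 1"
    using powr_diff[of "sqrt u" "a - 1" 1] by simp
  then have "sqrt u powr (a - 2) = sqrt u powr (a - 1) * inverse (sqrt u)"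
    using \<open>sqrt u > 0\<close> by (simp add: divide_inverse)
  moreover have "((\<lambda>u. sqrt u powr a) has_real_derivative a * sqrt u powr (a - 1) * (inverse (sqrt u) / 2)) (at u)"
    using \<open>sqrt u > 0\<close> assms by (intro DERIV_chain2[OF has_real_derivative_powr DERIV_real_sqrt])
  ultimately show ?thesis
    by (simp add: algebra_simps)
qed

lemma power_radial_coeffs_has_real_derivative:
  assumes "u > 0"
  shows "(power_radial_coeffs s n has_real_derivative power_radial_coeffs s (Suc n) u / 2) (at u)"
proof -
  have "s - 2 * real n - 2 = s - 2 * real (Suc n)"
    by simp
  then show ?thesis
    unfolding power_radial_coeffs_def[abs_def]
    using DERIV_cmult[OF has_real_derivative_sqrt_powr[OF assms, of "s - 2 * real n"], of "\<Prod>i<n. s - 2 * real i"]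
    by (simp add: algebra_simps)
qed

lemma prod_minus_double_eq_gchoose: "(\<Prod>i<n. s - 2 * real i) = 2 ^ n * fact n * ((s / 2) gchoose n)"
proof (induction n)
  case (Suc n)
  have gchoose_Suc: "((s / 2) gchoose Suc n) = ((s / 2) gchoose n) * ((s / 2 - real n) / real (Suc n))"
    using gbinomial_mult_1[of "s / 2" n] by (simp add: field_simps)
  show ?case
    using Suc by (simp add: gchoose_Suc field_simps)
qed simp

lemma power_radial_coeffs_norm_sq:
  "power_radial_coeffs s n ((norm x)\<^sup>2) = 1 * 2 ^ n * fact n * ((s / 2) gchoose n) * norm x powr (s - 2 * real n)"
  by (simp add: power_radial_coeffs_def prod_minus_double_eq_gchoose)

text \<open>\<open>log_radial_coeffs n u = 2 ^ n * (d/du) ^ n (ln u / 2)\<close> for \<open>u > 0\<close>.\<close>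
definition log_radial_coeffs :: "nat \<Rightarrow> real \<Rightarrow> real" where
  "log_radial_coeffs n u = (if n = 0 then ln (sqrt u) else (-1) ^ (n - 1) * 2 ^ (n - 1) * fact (n - 1) / u ^ n)"

lemma log_radial_coeffs_has_real_derivative:
  assumes u: "u > 0"
  shows "(log_radial_coeffs n has_real_derivative log_radial_coeffs (Suc n) u / 2) (at u)"
proof (cases n)
  case 0
  have "sqrt u > 0"
    using u by simp
  then have "((\<lambda>u. ln (sqrt u)) has_real_derivative (1 / sqrt u) * (inverse (sqrt u) / 2)) (at u)"
    using u by (intro DERIV_chain2[OF DERIV_ln_divide DERIV_real_sqrt])
  moreover have "(1 / sqrt u) * (inverse (sqrt u) / 2) = log_radial_coeffs (Suc n) u / 2"
    using 0 u by (simp add: log_radial_coeffs_def field_simps)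
  ultimately show ?thesis
    using 0 by (simp add: log_radial_coeffs_def[abs_def])
next
  case (Suc m)
  define K where "K = (-1::real) ^ m * 2 ^ m * fact m"
  have "((\<lambda>u. K / u ^ Suc m) has_real_derivative - (K * (real (Suc m) * u ^ m)) / (u ^ Suc m * u ^ Suc m)) (at u)"
    using DERIV_divide[OF DERIV_const DERIV_pow[of "Suc m" u], of K] u by simp
  moreover have "- (K * (real (Suc m) * u ^ m)) / (u ^ Suc m * u ^ Suc m) = log_radial_coeffs (Suc n) u / 2"
    using Suc u by (simp add: log_radial_coeffs_def K_def field_simps)
  ultimately show ?thesis
    using Suc by (simp add: log_radial_coeffs_def[abs_def] K_def)
qed

lemma log_radial_coeffs_norm_sq:
  assumes "x \<noteq> 0" and "n > 0"
  shows "log_radial_coeffs n ((norm x)\<^sup>2)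
       = - 1 * 2 ^ n * fact n * ((-1) ^ n / (2 * real n)) * norm x powr (0 - 2 * real n)"
proof -
  obtain m where n: "n = Suc m"
    using assms(2) gr0_implies_Suc by blast
  have "norm x > 0"
    using assms(1) by simp
  have "norm x powr (2 * real n) = norm x ^ (2 * n)"
    using powr_realpow[OF \<open>norm x > 0\<close>, of "2 * n"] by simp
  then have powr: "norm x powr (0 - 2 * real n) = 1 / norm x ^ (2 * n)"
    by (simp add: powr_minus divide_inverse)
  have "log_radial_coeffs n ((norm x)\<^sup>2) = (-1) ^ m * 2 ^ m * fact m * (1 / norm x ^ (2 * n))"
    using n by (simp add: log_radial_coeffs_def power_mult power2_eq_square)
  also have "\<dots> = - 1 * 2 ^ n * fact n * ((-1) ^ n / (2 * real n)) * (1 / norm x ^ (2 * n))"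
  proof -
    have "real (Suc m) \<noteq> 0"
      by simp
    then show ?thesis
      unfolding n by (simp add: field_simps del: of_nat_Suc)
  qed
  finally show ?thesis
    unfolding powr .
qed

lemma grad_norm_powr_norm_eq:
  fixes x :: "real^'n::finite"
  assumes x: "x \<noteq> 0"
  shows "(norm x powr (real k - s) * grad_norm k (\<lambda>y. norm y powr s) x)\<^sup>2
      = fact k * (\<Sum>l = 0..k div 2. fact (k - 2*l) * fact l
            * falling ((real CARD('n) - 3) / 2 + real l) l
            * (\<Sum>n = (k + 1) div 2..k - l. 2 ^ (2*n + l - k) * ((s/2) gchoose n)
                  * real (n choose (k - n)) * real ((k - n) choose l))\<^sup>2)"
proof -
  have "(\<lambda>y::real^'n. norm y powr s) = (\<lambda>z. power_radial_coeffs s 0 ((norm z)\<^sup>2))"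
    by (simp add: power_radial_coeffs_def)
  moreover have "(norm x powr (real k - s) * grad_norm k (\<lambda>z. power_radial_coeffs s 0 ((norm z)\<^sup>2)) x)\<^sup>2
      = fact k * (\<Sum>l = 0..k div 2. fact (k - 2 * l) * fact l
          * falling ((real CARD('n) - 3) / 2 + real l) l * (bracket_sum (\<lambda>n. (s / 2) gchoose n) k l)\<^sup>2)"
    using x by (intro grad_norm_radial_closed_form[where \<sigma> = 1])
      (simp_all add: power_radial_coeffs_has_real_derivative power_radial_coeffs_norm_sq)
  ultimately show ?thesis
    by (simp only: bracket_sum_def)
qed

lemma grad_norm_ln_norm_eq:
  fixes x :: "real^'n::finite"
  assumes "k \<ge> 1" and x: "x \<noteq> 0"
  shows "(norm x ^ k * grad_norm k (\<lambda>y. ln (norm y)) x)\<^sup>2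
      = fact k * (\<Sum>l = 0..k div 2. fact (k - 2*l) * fact l
            * falling ((real CARD('n) - 3) / 2 + real l) l
            * (\<Sum>n = (k + 1) div 2..k - l. 2 ^ (2*n + l - k) * ((-1) ^ n / (2 * real n))
                  * real (n choose (k - n)) * real ((k - n) choose l))\<^sup>2)"
proof -
  have "(\<lambda>y::real^'n. ln (norm y)) = (\<lambda>z. log_radial_coeffs 0 ((norm z)\<^sup>2))"
    by (simp add: log_radial_coeffs_def)
  moreover have "norm x powr (real k - 0) = norm x ^ k"
    using x by (simp add: powr_realpow)
  moreover have "(norm x powr (real k - 0) * grad_norm k (\<lambda>z. log_radial_coeffs 0 ((norm z)\<^sup>2)) x)\<^sup>2
      = fact k * (\<Sum>l = 0..k div 2. fact (k - 2 * l) * fact l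
          * falling ((real CARD('n) - 3) / 2 + real l) l * (bracket_sum (\<lambda>n. (-1) ^ n / (2 * real n)) k l)\<^sup>2)"
    using assms by (intro grad_norm_radial_closed_form[where \<sigma> = "-1"])
      (simp_all add: log_radial_coeffs_has_real_derivative log_radial_coeffs_norm_sq)
  ultimately show ?thesis
    by (simp only: bracket_sum_def)
qed

theorem theorem1p2:
  fixes k :: nat and s :: real
  shows "(\<forall>x :: real^'n. x \<noteq> 0 \<longrightarrow>
      (norm x powr (real k - s) * grad_norm k (\<lambda>y. norm y powr s) x)\<^sup>2
      = fact k * (\<Sum>l = 0..k div 2. fact (k - 2*l) * fact l
            * falling ((real CARD('n) - 3) / 2 + real l) l
            * (\<Sum>n = (k + 1) div 2..k - l. 2 ^ (2*n + l - k) * ((s/2) gchoose n)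
                  * real (n choose (k - n)) * real ((k - n) choose l))\<^sup>2))
   \<and> (k \<ge> 1 \<longrightarrow> (\<forall>x :: real^'n. x \<noteq> 0 \<longrightarrow>
      (norm x ^ k * grad_norm k (\<lambda>y. ln (norm y)) x)\<^sup>2
      = fact k * (\<Sum>l = 0..k div 2. fact (k - 2*l) * fact l
            * falling ((real CARD('n) - 3) / 2 + real l) l
            * (\<Sum>n = (k + 1) div 2..k - l. 2 ^ (2*n + l - k) * ((-1) ^ n / (2 * real n))
                  * real (n choose (k - n)) * real ((k - n) choose l))\<^sup>2)))"
  using grad_norm_powr_norm_eq grad_norm_ln_norm_eq by blast

end
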